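(* Let $f\in\mathcal{CM}$ be such that its representing measure has a density $\nu:(0,\infty)\to(0,\infty)$ with respect to Lebesgue measure. Assume that for some $\lambda_0>0$: (i) $\displaystyle \frac{(-\lambda)^n f^{(n)}(\lambda)}{n!}\ge\frac{(-\lambda)^{n+1}f^{(n+1)}(\lambda)}{(n+1)!}$ for all $n\in\mathbb{N}\cup\{0\}$ and all $\lambda>\lambda_0$; (ii) $\lim_{\lambda\to\infty}f(\lambda)=0$. Then the representing measure of $f$ has a non-increasing density, i.e. there is a non-increasing function $\mu:(0,\infty)\to[0,\infty)$ with $\nu(dt)=\mu(t)\,dt$.
   Context: A function $f:(0,\infty)\to\mathbb{R}$ is completely monotone, $f\in\mathcal{CM}$, if it is $C^\infty$ and $(-1)^n f^{(n)}(\lambda)\ge0$ for all $n\ge0$, $\lambda>0$; its representing measure is the unique measure $\nu$ on $[0,\infty)$ with $f(\lambda)=\int_{[0,\infty)}e^{-\lambda t}\nu(dt)$. *)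

theory Defs
  imports "HOL-Analysis.Analysis"
begin

definition completely_monotone :: "(real \<Rightarrow> real) \<Rightarrow> bool" where
  "completely_monotone f \<longleftrightarrow>
     (\<forall>n. \<forall>x>0. ((deriv ^^ n) f) differentiable (at x)) \<and>
     (\<forall>n. \<forall>x>0. (-1) ^ n * (deriv ^^ n) f x \<ge> 0)"

text \<open>The representing measure of f is nu(t) dt on (0,infinity), i.e.
  f(lambda) = integral over (0,infinity) of exp(-lambda t) nu(t) dt for all lambda > 0.\<close>
definition rep_density :: "(real \<Rightarrow> real) \<Rightarrow> (real \<Rightarrow> real) \<Rightarrow> bool" where
  "rep_density f \<nu> \<longleftrightarrow>
     \<nu> \<in> borel_measurable (restrict_space lborel {0<..}) \<and>
     (\<forall>t>0. \<nu> t \<ge> 0) \<and>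
     (\<forall>x>0. set_integrable lborel {0<..} (\<lambda>t. exp (- x * t) * \<nu> t) \<and>
              f x = (LINT t:{0<..}|lborel. exp (- x * t) * \<nu> t))"

end

theory Submission
  imports Defs
begin

text \<open>
  The coefficients \<open>(-x)^k f^(k)(x) / k!\<close> are the integrals of \<open>\<nu>\<close> against the Poisson weights
  \<open>(x t)^k e^(-x t) / k!\<close>, so hypothesis (i) says they decrease in \<open>k\<close>.  A block of \<open>L\<close>
  consecutive coefficients starting at \<open>M\<close> is the integral of \<open>\<nu>\<close> against a difference of two
  Poisson distribution functions; with \<open>x = n\<close>, \<open>M \<approx> n c\<close>, \<open>L \<approx> n h\<close> and \<open>n \<rightarrow> \<infinity>\<close>, Chernoff
  bounds turn this difference into the indicator of \<open>(c, c + h]\<close>.  Hence the mass of \<open>\<nu>\<close> on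
  \<open>(b, b + h]\<close> is at most its mass on \<open>(a, a + h]\<close> whenever \<open>a \<le> b\<close>.

  For such a \<open>\<nu>\<close>, let \<open>\<mu> t\<close> be the supremum over \<open>n\<close> of \<open>2^n\<close> times the mass of \<open>\<nu>\<close> on
  \<open>(t, t + 2^-n]\<close>.  It is non-increasing, and Riemann sums of step \<open>2^-n\<close> enclose the integrals of
  both \<open>\<mu>\<close> and \<open>\<nu>\<close> over \<open>(a, b]\<close> in an interval of length \<open>2^-n \<mu> a\<close>; so the two functions have
  the same integrals over all intervals and agree almost everywhere.
\<close>

section \<open>Poisson weights\<close>

definition poisson_weight :: "nat \<Rightarrow> real \<Rightarrow> real" where
  "poisson_weight k u = u ^ k * exp (- u) / fact k"

definition poisson_cdf :: "nat \<Rightarrow> real \<Rightarrow> real" where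
  "poisson_cdf K u = (\<Sum>k<K. poisson_weight k u)"

lemma poisson_weight_nonneg: "0 \<le> u \<Longrightarrow> 0 \<le> poisson_weight k u"
  by (simp add: poisson_weight_def)

lemma exp_partial_sum_le:
  fixes y :: real
  assumes "0 \<le> y"
  shows "(\<Sum>k<K. y ^ k / fact k) \<le> exp y"
proof -
  have s: "(\<lambda>n. y ^ n /\<^sub>R fact n) sums exp y" by (rule exp_converges)
  have "(\<Sum>k<K. y ^ k /\<^sub>R fact k) \<le> exp y"
    using sum_le_suminf[of "\<lambda>n. y ^ n /\<^sub>R fact n" "{..<K}"] s assms by (auto simp: sums_iff)
  then show ?thesis by (simp add: divide_inverse mult.commute)
qed

lemma power_div_fact_le_exp:
  fixes y :: real
  assumes "0 \<le> y"
  shows "y ^ k / fact k \<le> exp y"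
proof -
  have "y ^ k / fact k \<le> (\<Sum>j<Suc k. y ^ j / fact j)"
    using member_le_sum[of k "{..<Suc k}" "\<lambda>j. y ^ j / fact j"] assms by auto
  also have "\<dots> \<le> exp y" by (rule exp_partial_sum_le[OF assms])
  finally show ?thesis .
qed

lemma poisson_cdf_nonneg: "0 \<le> u \<Longrightarrow> 0 \<le> poisson_cdf K u"
  unfolding poisson_cdf_def by (intro sum_nonneg poisson_weight_nonneg)

lemma poisson_cdf_mono: "0 \<le> u \<Longrightarrow> M \<le> K \<Longrightarrow> poisson_cdf M u \<le> poisson_cdf K u"
  unfolding poisson_cdf_def by (rule sum_mono2) (auto intro: poisson_weight_nonneg)

lemma poisson_cdf_add_diff:
  "poisson_cdf (m + L) u - poisson_cdf m u = (\<Sum>j<L. poisson_weight (m + j) u)"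
  by (induction L) (auto simp: poisson_cdf_def)

lemma poisson_exp_moment_le:
  assumes "0 \<le> u"
  shows "(\<Sum>k<K. poisson_weight k u * exp (s * real k)) \<le> exp (u * (exp s - 1))"
proof -
  have "(\<Sum>k<K. poisson_weight k u * exp (s * real k))
      = exp (- u) * (\<Sum>k<K. (u * exp s) ^ k / fact k)"
    by (simp add: poisson_weight_def sum_distrib_left power_mult_distrib
        exp_of_nat_mult[symmetric] mult.commute mult.left_commute)
  also have "\<dots> \<le> exp (- u) * exp (u * exp s)"
    by (intro mult_left_mono exp_partial_sum_le) (use assms in auto)
  also have "\<dots> = exp (u * (exp s - 1))" by (simp add: exp_add[symmetric] algebra_simps)
  finally show ?thesis .
qed

lemma poisson_cdf_le_1: "0 \<le> u \<Longrightarrow> poisson_cdf K u \<le> 1"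
  using poisson_exp_moment_le[where s=0 and K=K] by (simp add: poisson_cdf_def)

lemma poisson_cdf_tendsto_1: "0 \<le> u \<Longrightarrow> (\<lambda>N. poisson_cdf N u) \<longlonglongrightarrow> 1"
proof -
  have "(\<lambda>N. exp (- u) * (\<Sum>k<N. u ^ k /\<^sub>R fact k)) \<longlonglongrightarrow> exp (- u) * exp u"
    using exp_converges[of u] by (intro tendsto_mult tendsto_const) (simp add: sums_def)
  moreover have "exp (- u) * (\<Sum>k<N. u ^ k /\<^sub>R fact k) = poisson_cdf N u" for N
    by (simp add: poisson_cdf_def poisson_weight_def sum_distrib_left divide_inverse
        mult.commute mult.left_commute)
  ultimately show ?thesis by (simp add: exp_add[symmetric])
qed

lemma poisson_cdf_chernoff:
  assumes "0 \<le> u" "0 \<le> s"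
  shows "poisson_cdf K u \<le> exp (s * real K) * exp (u * (exp (- s) - 1))"
proof -
  have "poisson_cdf K u \<le> (\<Sum>k<K. exp (s * real K) * (poisson_weight k u * exp (- s * real k)))"
    unfolding poisson_cdf_def
  proof (rule sum_mono)
    fix k assume "k \<in> {..<K}"
    then have "1 \<le> exp (s * real K) * exp (- s * real k)"
      using assms by (simp add: exp_add[symmetric] algebra_simps mult_left_mono)
    then show "poisson_weight k u \<le> exp (s * real K) * (poisson_weight k u * exp (- s * real k))"
      using poisson_weight_nonneg[OF assms(1), of k]
      by (metis mult.left_commute mult_left_mono mult.right_neutral)
  qed
  also have "\<dots> \<le> exp (s * real K) * exp (u * (exp (- s) - 1))"
    using poisson_exp_moment_le[OF assms(1), where K=K and s="- s"]
    by (simp add: sum_distrib_left[symmetric])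
  finally show ?thesis .
qed

lemma poisson_cdf_tail_chernoff:
  assumes "0 \<le> u" "0 \<le> s"
  shows "1 - poisson_cdf K u \<le> exp (- s * real K) * exp (u * (exp s - 1))"
proof (rule tendsto_upperbound)
  show "(\<lambda>N. poisson_cdf N u - poisson_cdf K u) \<longlonglongrightarrow> 1 - poisson_cdf K u"
    by (intro tendsto_diff poisson_cdf_tendsto_1 tendsto_const assms)
  show "\<forall>\<^sub>F N in sequentially. poisson_cdf N u - poisson_cdf K u
          \<le> exp (- s * real K) * exp (u * (exp s - 1))"
  proof (rule eventually_sequentiallyI[of K])
    fix N assume "K \<le> N"
    then obtain L where N: "N = K + L" using le_Suc_ex by blast
    have "poisson_cdf N u - poisson_cdf K u = (\<Sum>j<L. poisson_weight (K + j) u)"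
      using poisson_cdf_add_diff N by simp
    also have "\<dots> \<le> (\<Sum>j<L. exp (- s * real K) * (poisson_weight (K + j) u * exp (s * real (K + j))))"
    proof (rule sum_mono)
      fix j
      have "1 \<le> exp (- s * real K) * exp (s * real (K + j))"
        using assms by (simp add: exp_add[symmetric] algebra_simps)
      then show "poisson_weight (K + j) u
          \<le> exp (- s * real K) * (poisson_weight (K + j) u * exp (s * real (K + j)))"
        using poisson_weight_nonneg[OF assms(1), of "K + j"]
        by (metis mult.left_commute mult_left_mono mult.right_neutral)
    qed
    also have "\<dots> = exp (- s * real K) *
        (\<Sum>k\<in>(+) K ` {..<L}. poisson_weight k u * exp (s * real k))"
      by (simp add: sum_distrib_left sum.reindex)
    also have "\<dots> \<le> exp (- s * real K) * (\<Sum>k<N. poisson_weight k u * exp (s * real k))"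
      by (intro mult_left_mono sum_mono2)
        (use N assms in \<open>auto intro!: mult_nonneg_nonneg poisson_weight_nonneg\<close>)
    also have "\<dots> \<le> exp (- s * real K) * exp (u * (exp s - 1))"
      by (intro mult_left_mono poisson_exp_moment_le assms) auto
    finally show "poisson_cdf N u - poisson_cdf K u \<le> exp (- s * real K) * exp (u * (exp s - 1))" .
  qed
qed simp

lemma tendsto_exp_neg_linear: "0 < \<delta> \<Longrightarrow> (\<lambda>n. C * exp (- (\<delta> * real n))) \<longlonglongrightarrow> 0"
proof -
  assume "0 < \<delta>"
  then have "(\<lambda>n. exp (- \<delta>) ^ n) \<longlonglongrightarrow> 0" by (intro LIMSEQ_power_zero) simp
  then show ?thesis
    by (intro tendsto_mult_right_zero) (simp add: exp_of_nat_mult[symmetric] mult.commute)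
qed

text \<open>With mean \<open>n t\<close> and cut-off \<open>K n \<approx> n d\<close>, a suitable choice of \<open>s\<close> makes the Chernoff bound
  decay geometrically in \<open>n\<close> as soon as \<open>t \<noteq> d\<close>.\<close>

lemma poisson_cdf_tendsto_1_below:
  assumes "0 < t" "t < c" "\<And>n. real n * c - 2 \<le> real (K n)"
  shows "(\<lambda>n. poisson_cdf (K n) (real n * t)) \<longlonglongrightarrow> 1"
proof -
  define s where "s = (c - t) / (2 * c)"
  have s: "0 < s" "s < 1" using assms by (auto simp: s_def field_simps)
  have "1 - s \<le> exp (- s)" using exp_ge_add_one_self[of "- s"] by simp
  then have es: "exp s \<le> 1 / (1 - s)" using s by (simp add: exp_minus field_simps)
  define \<delta> where "\<delta> = s * c - t * (exp s - 1)"
  have "t * (exp s - 1) \<le> t * s / (1 - s)"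
    using mult_left_mono[OF es, of t] assms s by (simp add: field_simps)
  also have "\<dots> < s * c"
  proof -
    have "s * t < s * (c * (1 - s))"
      using assms s by (intro mult_strict_left_mono) (auto simp: s_def field_simps)
    then show ?thesis using s by (simp add: field_simps)
  qed
  finally have \<delta>: "0 < \<delta>" by (simp add: \<delta>_def)
  have "(\<lambda>n. 1 - poisson_cdf (K n) (real n * t)) \<longlonglongrightarrow> 0"
  proof (rule tendsto_sandwich[of "\<lambda>n. 0" _ _ "\<lambda>n. exp (2 * s) * exp (- (\<delta> * real n))"])
    show "\<forall>\<^sub>F n in sequentially. 0 \<le> 1 - poisson_cdf (K n) (real n * t)"
      using poisson_cdf_le_1 assms by (auto intro!: always_eventually)
    show "\<forall>\<^sub>F n in sequentially. 1 - poisson_cdf (K n) (real n * t) \<le> exp (2 * s) * exp (- (\<delta> * real n))"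
    proof (intro always_eventually allI)
      fix n
      have "s * (real n * c - 2) \<le> s * real (K n)"
        using assms(3)[of n] s by (intro mult_left_mono) auto
      then have "- s * real (K n) + real n * t * (exp s - 1) \<le> 2 * s + - (\<delta> * real n)"
        by (simp add: \<delta>_def algebra_simps)
      then have "exp (- s * real (K n)) * exp (real n * t * (exp s - 1)) \<le> exp (2 * s) * exp (- (\<delta> * real n))"
        by (simp flip: exp_add)
      then show "1 - poisson_cdf (K n) (real n * t) \<le> exp (2 * s) * exp (- (\<delta> * real n))"
        using poisson_cdf_tail_chernoff[of "real n * t" s "K n"] assms s by simp
    qed
  qed (rule tendsto_const, rule tendsto_exp_neg_linear[OF \<delta>])
  from tendsto_diff[OF tendsto_const this, of 1] show ?thesis by simp
qed

lemma poisson_cdf_tendsto_0_above: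
  assumes "0 \<le> d" "d < t" "\<And>n. real (K n) \<le> real n * d + 2"
  shows "(\<lambda>n. poisson_cdf (K n) (real n * t)) \<longlonglongrightarrow> 0"
proof -
  define s where "s = (t - d) / (2 * t)"
  have t: "0 < t" using assms by simp
  have s: "0 < s" "s \<le> 1" using assms t by (auto simp: s_def field_simps)
  have "1 + s \<le> exp s" using exp_ge_add_one_self[of s] by simp
  then have es: "exp (- s) \<le> 1 / (1 + s)" using s by (simp add: exp_minus field_simps)
  define \<delta> where "\<delta> = t * (1 - exp (- s)) - s * d"
  have "d * (1 + s) = t - (2 * t - d) * (t - d) / (2 * t)"
    using t by (simp add: s_def field_simps)
  moreover have "0 < (2 * t - d) * (t - d) / (2 * t)"
    using assms by (intro divide_pos_pos mult_pos_pos) auto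
  ultimately have "s * (d * (1 + s)) < s * t"
    using s by (intro mult_strict_left_mono) auto
  then have "s * d < t * (1 - 1 / (1 + s))"
    using s by (simp add: field_simps)
  also have "\<dots> \<le> t * (1 - exp (- s))" using es t by (intro mult_left_mono) auto
  finally have \<delta>: "0 < \<delta>" by (simp add: \<delta>_def)
  show ?thesis
  proof (rule tendsto_sandwich[of "\<lambda>n. 0" _ _ "\<lambda>n. exp (2 * s) * exp (- (\<delta> * real n))"])
    show "\<forall>\<^sub>F n in sequentially. 0 \<le> poisson_cdf (K n) (real n * t)"
      using poisson_cdf_nonneg t by (auto intro!: always_eventually)
    show "\<forall>\<^sub>F n in sequentially. poisson_cdf (K n) (real n * t) \<le> exp (2 * s) * exp (- (\<delta> * real n))"
    proof (intro always_eventually allI)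
      fix n
      have "s * real (K n) \<le> s * (real n * d + 2)"
        using assms(3)[of n] s by (intro mult_left_mono) auto
      then have "s * real (K n) + real n * t * (exp (- s) - 1) \<le> 2 * s + - (\<delta> * real n)"
        by (simp add: \<delta>_def algebra_simps)
      then have "exp (s * real (K n)) * exp (real n * t * (exp (- s) - 1)) \<le> exp (2 * s) * exp (- (\<delta> * real n))"
        by (simp flip: exp_add)
      then show "poisson_cdf (K n) (real n * t) \<le> exp (2 * s) * exp (- (\<delta> * real n))"
        using poisson_cdf_chernoff[of "real n * t" s "K n"] t s by simp
    qed
  qed (rule tendsto_const, rule tendsto_exp_neg_linear[OF \<delta>])
qed

lemma poisson_cdf_tendsto_step:
  assumes "0 < t" "0 \<le> d" "t \<noteq> d" "\<And>n. \<bar>real (K n) - real n * d\<bar> \<le> 2"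
  shows "(\<lambda>n. poisson_cdf (K n) (real n * t)) \<longlonglongrightarrow> (if t < d then 1 else 0)"
proof (cases "t < d")
  case True
  have "real n * d - 2 \<le> real (K n)" for n
    using assms(4)[of n] by (simp add: abs_le_iff)
  then have "(\<lambda>n. poisson_cdf (K n) (real n * t)) \<longlonglongrightarrow> 1"
    by (rule poisson_cdf_tendsto_1_below[OF assms(1) True])
  then show ?thesis using True by simp
next
  case False
  have "real (K n) \<le> real n * d + 2" for n
    using assms(4)[of n] by (simp add: abs_le_iff)
  then have "(\<lambda>n. poisson_cdf (K n) (real n * t)) \<longlonglongrightarrow> 0"
    using False assms by (intro poisson_cdf_tendsto_0_above[of d]) auto
  then show ?thesis using False by simp
qed

lemma poisson_window_tendsto_indicator:
  assumes "0 < t" "0 \<le> c" "c < d" "t \<noteq> c" "t \<noteq> d"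
    and "\<And>n. \<bar>real (M n) - real n * c\<bar> \<le> 2" "\<And>n. \<bar>real (K n) - real n * d\<bar> \<le> 2"
  shows "(\<lambda>n. poisson_cdf (K n) (real n * t) - poisson_cdf (M n) (real n * t))
           \<longlonglongrightarrow> indicator {c<..d} t"
proof -
  have "(\<lambda>n. poisson_cdf (K n) (real n * t) - poisson_cdf (M n) (real n * t))
          \<longlonglongrightarrow> (if t < d then 1 else 0) - (if t < c then 1 else 0)"
    using assms by (intro tendsto_diff poisson_cdf_tendsto_step) auto
  also have "(if t < d then 1 else 0) - (if t < c then 1 else 0) = (indicator {c<..d} t :: real)"
    using assms by (auto simp: indicator_def)
  finally show ?thesis .
qed

lemma poisson_cdf_le_exp_decay:
  assumes "0 \<le> d" "real K \<le> real n * d + 2" "1 \<le> n" "0 \<le> t"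
  shows "poisson_cdf K (real n * t) \<le> exp (d + 2 - t / 4)"
proof (cases "4 * d \<le> t")
  case True
  have "2 \<le> exp (1::real)" using exp_ge_add_one_self[of 1] by simp
  then have "exp (- 1::real) \<le> 1 / 2" by (simp add: exp_minus field_simps)
  then have "real n * t * (exp (- 1) - 1) \<le> real n * t * (- 1 / 2)"
    using assms by (intro mult_left_mono) auto
  moreover have "(real n - 1) * d \<le> (real n - 1) * (t / 2)"
    using assms True by (intro mult_left_mono) auto
  ultimately have "real K + real n * t * (exp (- 1) - 1) \<le> d + 2 - t / 4"
    using assms by (simp add: algebra_simps)
  then have "exp (1 * real K) * exp (real n * t * (exp (- 1) - 1)) \<le> exp (d + 2 - t / 4)"
    by (simp flip: exp_add)
  then show ?thesis
    using poisson_cdf_chernoff[of "real n * t" 1 K] assms by simp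
next
  case False
  have "poisson_cdf K (real n * t) \<le> 1" using poisson_cdf_le_1 assms by simp
  also have "1 \<le> exp (d + 2 - t / 4)" using False by simp
  finally show ?thesis .
qed

section \<open>Laplace transforms of densities\<close>

lemma power_mult_exp_le:
  fixes e t :: real
  assumes "0 < e" "0 \<le> t"
  shows "t ^ n * exp (- e * t) \<le> fact n / e ^ n"
proof -
  have "(e * t) ^ n / fact n \<le> exp (e * t)" by (rule power_div_fact_le_exp) (use assms in simp)
  then have "e ^ n * (t ^ n * exp (- e * t)) \<le> fact n"
    by (simp add: power_mult_distrib exp_minus field_simps)
  then show ?thesis using assms by (simp add: field_simps)
qed

lemma exp_taylor_remainder_le: "\<bar>exp z - 1 - z\<bar> \<le> exp \<bar>z\<bar> * z\<^sup>2" for z :: real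
proof -
  have "0 \<le> exp z - 1 - z" using exp_ge_add_one_self[of z] by linarith
  moreover have "exp z - (1 + z) \<le> exp \<bar>z\<bar> * z\<^sup>2"
    using Taylor_exp_field[of z 1] by (simp add: power2_eq_square)
  ultimately show ?thesis by simp
qed

definition window_mass :: "(real \<Rightarrow> real) \<Rightarrow> real \<Rightarrow> real \<Rightarrow> real" where
  "window_mass \<nu> s h = integral\<^sup>L lborel (\<lambda>t. indicator {s<..s + h} t * \<nu> t)"

lemma nat_ceiling_approx:
  assumes "0 \<le> y"
  shows "\<bar>real (nat \<lceil>y\<rceil>) - y\<bar> \<le> 1"
proof -
  have "real (nat \<lceil>y\<rceil>) = of_int \<lceil>y\<rceil>" using assms by simp
  then show ?thesis
    using of_int_ceiling_le_add_one[of y] le_of_int_ceiling[of y] unfolding abs_le_iff by linarith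
qed

locale laplace_density =
  fixes \<nu> :: "real \<Rightarrow> real"
  assumes integrable_laplace: "0 < x \<Longrightarrow> integrable lborel (\<lambda>t. indicator {0<..} t * (exp (- x * t) * \<nu> t))"
    and nonneg: "0 < t \<Longrightarrow> 0 \<le> \<nu> t"
begin

lemma integrable_bounded_factor:
  assumes x: "0 < x" and \<phi>: "\<phi> \<in> borel_measurable borel" and bound: "\<And>t. 0 < t \<Longrightarrow> \<bar>\<phi> t\<bar> \<le> C"
  shows "integrable lborel (\<lambda>t. indicator {0<..} t * (\<phi> t * (exp (- x * t) * \<nu> t)))"
proof (rule Bochner_Integration.integrable_bound)
  show "integrable lborel (\<lambda>t. C * (indicator {0<..} t * (exp (- x * t) * \<nu> t)))"
    using integrable_laplace[OF x] by (rule integrable_mult_right)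
  have "(\<lambda>t. indicator {0<..} t * (exp (- x * t) * \<nu> t)) \<in> borel_measurable lborel"
    using integrable_laplace[OF x] by (rule borel_measurable_integrable)
  then have "(\<lambda>t. \<phi> t * (indicator {0<..} t * (exp (- x * t) * \<nu> t))) \<in> borel_measurable lborel"
    using \<phi> by measurable
  then show "(\<lambda>t. indicator {0<..} t * (\<phi> t * (exp (- x * t) * \<nu> t))) \<in> borel_measurable lborel"
    by (simp add: mult.commute mult.left_commute)
  show "AE t in lborel. norm (indicator {0<..} t * (\<phi> t * (exp (- x * t) * \<nu> t)))
      \<le> norm (C * (indicator {0<..} t * (exp (- x * t) * \<nu> t)))"
  proof (intro AE_I2)
    fix t :: real
    show "norm (indicator {0<..} t * (\<phi> t * (exp (- x * t) * \<nu> t)))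
      \<le> norm (C * (indicator {0<..} t * (exp (- x * t) * \<nu> t)))"
      using bound[of t] by (cases "0 < t") (auto simp: abs_mult intro!: mult_right_mono)
  qed
qed

lemma measurable_restricted:
  assumes "\<phi> \<in> borel_measurable borel"
  shows "(\<lambda>t. indicator {0<..} t * (\<phi> t * \<nu> t)) \<in> borel_measurable lborel"
proof -
  have "(\<lambda>t. indicator {0<..} t * (exp (- 1 * t) * \<nu> t)) \<in> borel_measurable lborel"
    using integrable_laplace[of 1] by (intro borel_measurable_integrable) simp
  then have "(\<lambda>t. (\<phi> t * exp t) * (indicator {0<..} t * (exp (- 1 * t) * \<nu> t))) \<in> borel_measurable lborel"
    using assms by measurable
  then show ?thesis by (simp add: exp_minus field_simps)
qed

lemma integrable_on_interval:
  assumes "0 < u"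
  shows "integrable lborel (\<lambda>t. indicator {u<..v} t * \<nu> t)"
proof -
  have "integrable lborel
      (\<lambda>t. indicator {0<..} t * ((indicator {u<..v} t * exp t) * (exp (- 1 * t) * \<nu> t)))"
    by (rule integrable_bounded_factor[where C = "exp v"]) (auto simp: indicator_def)
  moreover have "indicator {0<..} t * ((indicator {u<..v} t * exp t) * (exp (- 1 * t) * \<nu> t))
      = indicator {u<..v} t * \<nu> t" for t
    using assms by (auto simp: indicator_def exp_minus)
  ultimately show ?thesis by (simp only:)
qed

definition laplace_deriv :: "nat \<Rightarrow> real \<Rightarrow> real" where
  "laplace_deriv n x = integral\<^sup>L lborel (\<lambda>t. indicator {0<..} t * ((- t) ^ n * (exp (- x * t) * \<nu> t)))"

lemma integrable_moment:
  assumes "0 < x"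
  shows "integrable lborel (\<lambda>t. indicator {0<..} t * (t ^ n * (exp (- x * t) * \<nu> t)))"
proof -
  have "integrable lborel
      (\<lambda>t. indicator {0<..} t * ((t ^ n * exp (- (x / 2) * t)) * (exp (- (x / 2) * t) * \<nu> t)))"
  proof (rule integrable_bounded_factor)
    show "0 < x / 2" using assms by simp
    show "(\<lambda>t. t ^ n * exp (- (x / 2) * t)) \<in> borel_measurable borel" by measurable
    show "\<bar>t ^ n * exp (- (x / 2) * t)\<bar> \<le> fact n / (x / 2) ^ n" if "0 < t" for t
      using power_mult_exp_le[of "x / 2" t n] assms that by simp
  qed
  moreover have "(t ^ n * exp (- (x / 2) * t)) * (exp (- (x / 2) * t) * \<nu> t)
      = t ^ n * (exp (- x * t) * \<nu> t)" for t
    by (simp add: mult_exp_exp)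
  ultimately show ?thesis by (simp only:)
qed

lemma integrable_laplace_deriv:
  assumes "0 < x"
  shows "integrable lborel (\<lambda>t. indicator {0<..} t * ((- t) ^ n * (exp (- x * t) * \<nu> t)))"
proof -
  have "integrable lborel (\<lambda>t. (- 1) ^ n * (indicator {0<..} t * (t ^ n * (exp (- x * t) * \<nu> t))))"
    by (rule integrable_mult_right, rule integrable_moment[OF assms])
  moreover have "(- 1) ^ n * (indicator {0<..} t * (t ^ n * (exp (- x * t) * \<nu> t)))
      = indicator {0<..} t * ((- t) ^ n * (exp (- x * t) * \<nu> t))" for t :: real
    by (subst power_minus) (simp add: mult_ac)
  ultimately show ?thesis by (simp only:)
qed

text \<open>The restriction \<open>\<bar>y - x\<bar> \<le> x / 2\<close> leaves the decay \<open>exp (- x t / 2)\<close>, which keeps the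
  remainder integrable.\<close>

lemma laplace_deriv_taylor_bound:
  assumes x: "0 < x" and y: "\<bar>y - x\<bar> \<le> x / 2"
  shows "\<bar>laplace_deriv n y - laplace_deriv n x - (y - x) * laplace_deriv (Suc n) x\<bar>
     \<le> (y - x)\<^sup>2 *
        integral\<^sup>L lborel (\<lambda>t. indicator {0<..} t * (t ^ (n + 2) * (exp (- (x / 2) * t) * \<nu> t)))"
proof -
  define h where "h = y - x"
  have y0: "0 < y" using x y abs_le_iff[of "y - x" "x / 2"] by linarith
  let ?F = "\<lambda>z k t. indicator {0<..} t * ((- t) ^ k * (exp (- z * t) * \<nu> t))"
  let ?B = "\<lambda>t. indicator {0<..} t * (t ^ (n + 2) * (exp (- (x / 2) * t) * \<nu> t))"
  have pointwise: "\<bar>?F y n t - ?F x n t - h * ?F x (Suc n) t\<bar> \<le> h\<^sup>2 * ?B t" for t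
  proof (cases "0 < t")
    case True
    have e: "exp (- y * t) = exp (- x * t) * exp (- h * t)"
      by (simp add: h_def mult_exp_exp algebra_simps)
    have "?F y n t - ?F x n t - h * ?F x (Suc n) t
        = (- t) ^ n * (exp (- y * t) * \<nu> t) - (- t) ^ n * (exp (- x * t) * \<nu> t)
          - h * ((- t) ^ Suc n * (exp (- x * t) * \<nu> t))"
      using True by simp
    also have "\<dots> = (- t) ^ n * \<nu> t * exp (- x * t) * (exp (- h * t) - 1 - (- h * t))"
      by (simp only: e) (simp add: algebra_simps)
    also have "\<bar>\<dots>\<bar> = t ^ n * \<nu> t * exp (- x * t) * \<bar>exp (- h * t) - 1 - (- h * t)\<bar>"
      using True nonneg[OF True] by (simp add: abs_mult power_abs)
    also have "\<dots> \<le> t ^ n * \<nu> t * exp (- x * t) * (exp \<bar>- h * t\<bar> * (- h * t)\<^sup>2)"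
      using True nonneg[OF True] by (intro mult_left_mono exp_taylor_remainder_le) auto
    also have "\<dots> = h\<^sup>2 * (t ^ (n + 2) * \<nu> t * (exp (- x * t) * exp (\<bar>h\<bar> * t)))"
      using True by (simp add: abs_mult power2_eq_square algebra_simps)
    also have "\<dots> \<le> h\<^sup>2 * (t ^ (n + 2) * \<nu> t * exp (- (x / 2) * t))"
    proof -
      have "- x * t + \<bar>h\<bar> * t \<le> - (x / 2) * t"
        using True y by (simp add: h_def algebra_simps mult_right_mono)
      then have "exp (- x * t) * exp (\<bar>h\<bar> * t) \<le> exp (- (x / 2) * t)" by (simp add: mult_exp_exp)
      then show ?thesis using True nonneg[OF True] by (intro mult_left_mono) auto
    qed
    also have "\<dots> = h\<^sup>2 * ?B t" using True by (simp add: algebra_simps)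
    finally show ?thesis .
  qed simp
  have "laplace_deriv n y - laplace_deriv n x - h * laplace_deriv (Suc n) x
      = integral\<^sup>L lborel (\<lambda>t. ?F y n t - ?F x n t - h * ?F x (Suc n) t)"
    using integrable_laplace_deriv[OF y0, of n] integrable_laplace_deriv[OF x, of n]
      integrable_laplace_deriv[OF x, of "Suc n"]
    by (simp add: laplace_deriv_def)
  moreover have "\<bar>integral\<^sup>L lborel (\<lambda>t. ?F y n t - ?F x n t - h * ?F x (Suc n) t)\<bar>
      \<le> integral\<^sup>L lborel (\<lambda>t. h\<^sup>2 * ?B t)"
  proof (rule integral_abs_bound_integral)
    show "integrable lborel (\<lambda>t. ?F y n t - ?F x n t - h * ?F x (Suc n) t)"
      using integrable_laplace_deriv[OF y0, of n] integrable_laplace_deriv[OF x, of n]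
        integrable_laplace_deriv[OF x, of "Suc n"] by simp
    show "integrable lborel (\<lambda>t. h\<^sup>2 * ?B t)"
      using integrable_moment[of "x / 2" "n + 2"] x by simp
  qed (rule pointwise)
  moreover have "integral\<^sup>L lborel (\<lambda>t. h\<^sup>2 * ?B t) = h\<^sup>2 * integral\<^sup>L lborel ?B"
    by (rule integral_mult_right_zero)
  ultimately show ?thesis unfolding h_def by (simp only:)
qed

lemma laplace_deriv_has_derivative:
  assumes x: "0 < x"
  shows "(laplace_deriv n has_real_derivative laplace_deriv (Suc n) x) (at x)"
proof -
  define B where
    "B = integral\<^sup>L lborel (\<lambda>t. indicator {0<..} t * (t ^ (n + 2) * (exp (- (x / 2) * t) * \<nu> t)))"
  have "((\<lambda>y. (laplace_deriv n y - laplace_deriv n x) / (y - x) - laplace_deriv (Suc n) x) \<longlongrightarrow> 0) (at x)"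
  proof (rule Lim_null_comparison)
    show "\<forall>\<^sub>F y in at x. norm ((laplace_deriv n y - laplace_deriv n x) / (y - x) - laplace_deriv (Suc n) x)
        \<le> \<bar>y - x\<bar> * B"
      unfolding eventually_at
    proof (intro exI[of _ "x / 2"] conjI ballI impI)
      fix y assume "y \<noteq> x \<and> dist y x < x / 2"
      then have yx: "y \<noteq> x" "\<bar>y - x\<bar> \<le> x / 2" by (auto simp: dist_real_def)
      have "norm ((laplace_deriv n y - laplace_deriv n x) / (y - x) - laplace_deriv (Suc n) x)
          = \<bar>laplace_deriv n y - laplace_deriv n x - (y - x) * laplace_deriv (Suc n) x\<bar> / \<bar>y - x\<bar>"
        using yx by (simp add: field_simps abs_divide)
      also have "\<dots> \<le> (y - x)\<^sup>2 * B / \<bar>y - x\<bar>"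
        using laplace_deriv_taylor_bound[OF x yx(2)] by (intro divide_right_mono) (auto simp: B_def)
      also have "\<dots> = \<bar>y - x\<bar> * B" using yx by (simp add: power2_eq_square field_simps abs_mult_self_eq)
      finally show "norm ((laplace_deriv n y - laplace_deriv n x) / (y - x) - laplace_deriv (Suc n) x)
          \<le> \<bar>y - x\<bar> * B" .
    qed (use x in simp)
    have "((\<lambda>y. \<bar>y - x\<bar> * B) \<longlongrightarrow> \<bar>x - x\<bar> * B) (at x)"
      by (intro tendsto_intros)
    then show "((\<lambda>y. \<bar>y - x\<bar> * B) \<longlongrightarrow> 0) (at x)" by simp
  qed
  then show ?thesis by (simp add: has_field_derivative_iff LIM_zero_iff)
qed

lemma higher_deriv_eq_laplace_deriv:
  assumes f: "\<And>x. 0 < x \<Longrightarrow> f x = laplace_deriv 0 x"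
  shows "0 < x \<Longrightarrow> (deriv ^^ n) f x = laplace_deriv n x"
proof (induction n arbitrary: x)
  case 0
  then show ?case using f by simp
next
  case (Suc n)
  have "eventually (\<lambda>y. y \<in> {0<..}) (nhds x)"
    by (rule eventually_nhds_in_open) (use Suc.prems in auto)
  then have "eventually (\<lambda>y. (deriv ^^ n) f y = laplace_deriv n y) (nhds x)"
    by eventually_elim (use Suc.IH in auto)
  then have "(deriv ^^ Suc n) f x = deriv (laplace_deriv n) x"
    by (simp add: deriv_cong_ev)
  also have "\<dots> = laplace_deriv (Suc n) x"
    by (rule DERIV_imp_deriv[OF laplace_deriv_has_derivative[OF Suc.prems]])
  finally show ?case .
qed

definition poisson_mixture :: "nat \<Rightarrow> real \<Rightarrow> real" where
  "poisson_mixture k x = integral\<^sup>L lborel (\<lambda>t. indicator {0<..} t * (poisson_weight k (x * t) * \<nu> t))"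

lemma poisson_mixture_integrand:
  "(- x) ^ k / fact k * (indicator {0<..} t * ((- t) ^ k * (exp (- x * t) * \<nu> t)))
   = indicator {0<..} t * (poisson_weight k (x * t) * \<nu> t)"
proof -
  have "(- x) ^ k * (- t) ^ k = (x * t) ^ k" by (simp flip: power_mult_distrib)
  then show ?thesis by (simp add: poisson_weight_def field_simps)
qed

lemma laplace_deriv_eq_poisson_mixture:
  "(- x) ^ k * laplace_deriv k x / fact k = poisson_mixture k x"
proof -
  have "(- x) ^ k * laplace_deriv k x / fact k = integral\<^sup>L lborel
      (\<lambda>t. (- x) ^ k / fact k * (indicator {0<..} t * ((- t) ^ k * (exp (- x * t) * \<nu> t))))"
    by (simp add: laplace_deriv_def)
  then show ?thesis by (simp only: poisson_mixture_integrand poisson_mixture_def)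
qed

lemma integrable_poisson_mixture:
  assumes "0 < x"
  shows "integrable lborel (\<lambda>t. indicator {0<..} t * (poisson_weight k (x * t) * \<nu> t))"
proof -
  have "integrable lborel
      (\<lambda>t. (- x) ^ k / fact k * (indicator {0<..} t * ((- t) ^ k * (exp (- x * t) * \<nu> t))))"
    by (rule integrable_mult_right, rule integrable_laplace_deriv[OF assms])
  then show ?thesis by (simp only: poisson_mixture_integrand)
qed

lemma integral_poisson_window:
  assumes "0 < x"
  shows "integral\<^sup>L lborel
      (\<lambda>t. indicator {0<..} t * ((poisson_cdf (m + L) (x * t) - poisson_cdf m (x * t)) * \<nu> t))
    = (\<Sum>j<L. poisson_mixture (m + j) x)"
proof -
  have "(\<lambda>t. indicator {0<..} t * ((poisson_cdf (m + L) (x * t) - poisson_cdf m (x * t)) * \<nu> t))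
      = (\<lambda>t. \<Sum>j<L. indicator {0<..} t * (poisson_weight (m + j) (x * t) * \<nu> t))"
    by (simp add: poisson_cdf_add_diff sum_distrib_left sum_distrib_right)
  then show ?thesis
    using Bochner_Integration.integral_sum[of "{..<L}" lborel
        "\<lambda>j t. indicator {0<..} t * (poisson_weight (m + j) (x * t) * \<nu> t)"]
      integrable_poisson_mixture[OF assms]
    by (simp add: poisson_mixture_def)
qed

lemma tendsto_integral_poisson_window:
  assumes c: "0 \<le> c" and h: "0 < h"
  defines "M \<equiv> \<lambda>n::nat. nat \<lceil>real n * c\<rceil>"
    and "L \<equiv> \<lambda>n::nat. nat \<lceil>real n * h\<rceil>"
  shows "(\<lambda>n. integral\<^sup>L lborel (\<lambda>t. indicator {0<..} t *
            ((poisson_cdf (M n + L n) (real n * t) - poisson_cdf (M n) (real n * t)) * \<nu> t)))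
     \<longlonglongrightarrow> window_mass \<nu> c h"
proof -
  define d where "d = c + h"
  have d: "0 \<le> d" "c < d" using c h by (auto simp: d_def)
  have M1: "\<bar>real (M n) - real n * c\<bar> \<le> 1" for n
    unfolding M_def using c by (intro nat_ceiling_approx) simp
  have L1: "\<bar>real (L n) - real n * h\<bar> \<le> 1" for n
    unfolding L_def using h by (intro nat_ceiling_approx) simp
  have M: "\<bar>real (M n) - real n * c\<bar> \<le> 2" for n
    using M1[of n] by simp
  have K: "\<bar>real (M n + L n) - real n * d\<bar> \<le> 2" for n
    using M1[of n] L1[of n] unfolding d_def abs_le_iff of_nat_add by argo
  let ?P = "\<lambda>n t. poisson_cdf (M n + L n) (real n * t) - poisson_cdf (M n) (real n * t)"
  let ?w = "\<lambda>t. exp (d + 2) * (indicator {0<..} t * (exp (- (1 / 4) * t) * \<nu> t))"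
  have "(\<lambda>n. integral\<^sup>L lborel (\<lambda>t. indicator {0<..} t * (?P n t * \<nu> t)))
      \<longlonglongrightarrow> integral\<^sup>L lborel (\<lambda>t. indicator {0<..} t * (indicator {c<..d} t * \<nu> t))"
  proof (rule integral_dominated_convergence)
    show "(\<lambda>t. indicator {0<..} t * (indicator {c<..d} t * \<nu> t)) \<in> borel_measurable lborel"
      by (rule measurable_restricted) measurable
    show "(\<lambda>t. indicator {0<..} t * (?P n t * \<nu> t)) \<in> borel_measurable lborel" for n
      by (rule measurable_restricted) (simp add: poisson_cdf_def poisson_weight_def)
    show "integrable lborel ?w" by (rule integrable_mult_right, rule integrable_laplace) simp
    have "AE t in lborel. t \<noteq> c \<and> t \<noteq> d"
      using AE_lborel_singleton[of c] AE_lborel_singleton[of d] by eventually_elim auto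
    then show "AE t in lborel. (\<lambda>n. indicator {0<..} t * (?P n t * \<nu> t))
        \<longlonglongrightarrow> indicator {0<..} t * (indicator {c<..d} t * \<nu> t)"
    proof eventually_elim
      case (elim t)
      show ?case
      proof (cases "0 < t")
        case True
        then have "(\<lambda>n. ?P n t) \<longlonglongrightarrow> indicator {c<..d} t"
          using elim M K c d by (intro poisson_window_tendsto_indicator) auto
        then show ?thesis by (intro tendsto_mult tendsto_const)
      qed simp
    qed
    show "AE t in lborel. norm (indicator {0<..} t * (?P n t * \<nu> t)) \<le> ?w t" for n
    proof (intro AE_I2)
      fix t :: real
      show "norm (indicator {0<..} t * (?P n t * \<nu> t)) \<le> ?w t"
      proof (cases "0 < t \<and> 1 \<le> n")
        case True
        have "?P n t \<le> poisson_cdf (M n + L n) (real n * t)"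
          using poisson_cdf_nonneg[of "real n * t" "M n"] True by simp
        also have "\<dots> \<le> exp (d + 2 - t / 4)"
          using True d K[of n] by (intro poisson_cdf_le_exp_decay) (auto simp: abs_le_iff)
        also have "\<dots> = exp (d + 2) * exp (- (1 / 4) * t)" by (simp flip: exp_add)
        finally have "?P n t * \<nu> t \<le> exp (d + 2) * exp (- (1 / 4) * t) * \<nu> t"
          using nonneg[of t] True by (intro mult_right_mono) auto
        moreover have "0 \<le> ?P n t"
          using poisson_cdf_mono[of "real n * t" "M n" "M n + L n"] True by simp
        ultimately show ?thesis using True nonneg[of t] by simp
      next
        case False
        then consider "\<not> 0 < t" | "n = 0" by linarith
        then show ?thesis using nonneg[of t] by cases (auto simp: M_def L_def indicator_def)
      qed
    qed
  qed
  moreover have "indicator {0<..} t * (indicator {c<..d} t * \<nu> t) = indicator {c<..c + h} t * \<nu> t" for t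
    using c by (auto simp: d_def indicator_def)
  ultimately show ?thesis by (simp add: window_mass_def)
qed

text \<open>Monotonicity of the coefficients \<open>poisson_mixture k x\<close> in \<open>k\<close> survives the limit: a Poisson
  window further to the right collects smaller coefficients.\<close>

lemma window_mass_antitone:
  assumes mono: "\<And>x k. l0 < x \<Longrightarrow> poisson_mixture (Suc k) x \<le> poisson_mixture k x"
    and l0: "0 \<le> l0" and ab: "0 \<le> a" "a \<le> b" and h: "0 < h"
  shows "window_mass \<nu> b h \<le> window_mass \<nu> a h"
proof -
  define M where "M = (\<lambda>a n. nat \<lceil>real n * a\<rceil>)"
  define L where "L = (\<lambda>n::nat. nat \<lceil>real n * h\<rceil>)"
  define W where "W = (\<lambda>a n. integral\<^sup>L lborel (\<lambda>t. indicator {0<..} t *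
      ((poisson_cdf (M a n + L n) (real n * t) - poisson_cdf (M a n) (real n * t)) * \<nu> t)))"
  have lim: "W a \<longlonglongrightarrow> window_mass \<nu> a h" if "0 \<le> a" for a
    unfolding W_def M_def L_def using that h by (rule tendsto_integral_poisson_window)
  obtain N where N: "l0 < real N" using reals_Archimedean2 by blast
  have "W b n \<le> W a n" if "N \<le> n" for n
  proof -
    have n: "l0 < real n" "0 < real n" using N l0 that by linarith+
    have anti: "poisson_mixture k' (real n) \<le> poisson_mixture k (real n)" if "k \<le> k'" for k k'
      using mono[OF n(1)] that by (rule lift_Suc_antimono_le)
    have "M a n \<le> M b n" unfolding M_def using ab by (intro nat_mono ceiling_mono mult_left_mono) auto
    then show ?thesis
      unfolding W_def integral_poisson_window[OF n(2)] by (intro sum_mono anti) simp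
  qed
  then show ?thesis
    using ab by (intro tendsto_le[OF _ lim lim] eventually_sequentiallyI) auto
qed

end

section \<open>Densities with antitone window masses\<close>

lemma emeasure_density_interval_greaterThan:
  fixes G :: "real \<Rightarrow> real"
  assumes c: "0 < c"
    and int: "\<And>u v. 0 < u \<Longrightarrow> integrable lborel (\<lambda>t. indicator {u<..v} t * G t)"
    and nonneg: "\<And>t. 0 < t \<Longrightarrow> 0 \<le> G t"
  shows "emeasure (density lborel (\<lambda>t. ennreal (indicator {c<..d} t * G t))) {x<..}
       = ennreal (integral\<^sup>L lborel (\<lambda>t. indicator {max c x<..d} t * G t))"
proof -
  have "(\<lambda>t. ennreal (indicator {c<..d} t * G t)) \<in> borel_measurable lborel"
    using borel_measurable_integrable[OF int[OF c]] by measurable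
  then have "emeasure (density lborel (\<lambda>t. ennreal (indicator {c<..d} t * G t))) {x<..}
      = (\<integral>\<^sup>+ t. ennreal (indicator {max c x<..d} t * G t) \<partial>lborel)"
    by (simp add: emeasure_density) (auto intro!: nn_integral_cong simp: indicator_def)
  also have "\<dots> = ennreal (integral\<^sup>L lborel (\<lambda>t. indicator {max c x<..d} t * G t))"
    using c nonneg by (intro nn_integral_eq_integral int AE_I2) (auto simp: indicator_def)
  finally show ?thesis .
qed

lemma AE_eq_of_interval_integrals_eq:
  fixes f g :: "real \<Rightarrow> real"
  assumes int_f: "\<And>u v. 0 < u \<Longrightarrow> integrable lborel (\<lambda>t. indicator {u<..v} t * f t)"
    and int_g: "\<And>u v. 0 < u \<Longrightarrow> integrable lborel (\<lambda>t. indicator {u<..v} t * g t)"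
    and f: "\<And>t. 0 < t \<Longrightarrow> 0 \<le> f t" and g: "\<And>t. 0 < t \<Longrightarrow> 0 \<le> g t"
    and eq: "\<And>u v. 0 < u \<Longrightarrow> integral\<^sup>L lborel (\<lambda>t. indicator {u<..v} t * f t)
                                  = integral\<^sup>L lborel (\<lambda>t. indicator {u<..v} t * g t)"
  shows "AE t in lborel. 0 < t \<longrightarrow> f t = g t"
proof -
  have local_eq: "AE t in lborel. indicator {c<..d} t * f t = indicator {c<..d} t * g t"
    if c: "0 < c" for c d
  proof -
    let ?f = "\<lambda>t. ennreal (indicator {c<..d} t * f t)"
    let ?g = "\<lambda>t. ennreal (indicator {c<..d} t * g t)"
    have mf: "?f \<in> borel_measurable lborel"
      using borel_measurable_integrable[OF int_f[OF c]] by measurable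
    have mg: "?g \<in> borel_measurable lborel"
      using borel_measurable_integrable[OF int_g[OF c]] by measurable
    have em_f: "emeasure (density lborel ?f) {x<..}
        = ennreal (integral\<^sup>L lborel (\<lambda>t. indicator {max c x<..d} t * f t))" for x
      by (rule emeasure_density_interval_greaterThan[OF c int_f f])
    have em_g: "emeasure (density lborel ?g) {x<..}
        = ennreal (integral\<^sup>L lborel (\<lambda>t. indicator {max c x<..d} t * g t))" for x
      by (rule emeasure_density_interval_greaterThan[OF c int_g g])
    have "density lborel ?f = density lborel ?g"
    proof (rule measure_eqI_lessThan)
      show "emeasure (density lborel ?f) {x<..} < \<infinity>" for x
        unfolding em_f by simp
      show "emeasure (density lborel ?f) {x<..} = emeasure (density lborel ?g) {x<..}" for x
        unfolding em_f em_g using eq[of "max c x"] c by simp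
    qed simp_all
    moreover have "integral\<^sup>N lborel ?f \<noteq> \<infinity>"
    proof -
      have "integral\<^sup>N lborel ?f = (\<integral>\<^sup>+ t. ?f t * indicator {c - 1<..} t \<partial>lborel)"
        by (rule nn_integral_cong) (use c in \<open>auto simp: indicator_def\<close>)
      also have "\<dots> = emeasure (density lborel ?f) {c - 1<..}"
        using mf by (simp add: emeasure_density)
      finally show ?thesis unfolding em_f by simp
    qed
    ultimately have "AE t in lborel. ?f t = ?g t"
      using finite_density_unique[OF mf mg] by simp
    then show ?thesis
      by eventually_elim (use c f g in \<open>auto simp: indicator_def\<close>)
  qed
  have "AE t in lborel. \<forall>N::nat. indicator {1 / Suc N<..Suc N} t * f t = indicator {1 / Suc N<..Suc N} t * g t"
    by (subst AE_all_countable) (intro allI local_eq, simp)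
  then show ?thesis
  proof eventually_elim
    case (elim t)
    show ?case
    proof
      assume t: "0 < t"
      obtain N1 :: nat where N1: "t \<le> real N1" using real_arch_simple by blast
      obtain N2 :: nat where N2: "1 / t < real N2" using reals_Archimedean2 by blast
      define N where "N = max N1 N2"
      have "1 / t < real (Suc N)" using N2 by (simp add: N_def)
      then have "1 / real (Suc N) < t" using t by (simp add: field_simps)
      moreover have "t \<le> real (Suc N)" using N1 by (simp add: N_def)
      ultimately have "t \<in> {1 / Suc N<..Suc N}" by simp
      then show "f t = g t" using elim[rule_format, of N] by simp
    qed
  qed
qed

lemma window_mass_split:
  fixes g :: "real \<Rightarrow> real"
  assumes int: "\<And>u v. a \<le> u \<Longrightarrow> integrable lborel (\<lambda>t. indicator {u<..v} t * g t)" and h: "0 \<le> h"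
  shows "window_mass g a (real k * h) = (\<Sum>j<k. window_mass g (a + real j * h) h)"
proof (induction k)
  case (Suc k)
  have split: "indicator {u<..w} t = indicator {u<..v} t + (indicator {v<..w} t :: real)"
    if "u \<le> v" "v \<le> w" for u v w t :: real
    using that by (auto simp: indicator_def)
  have "a \<le> a + real k * h" "a + real k * h \<le> a + real k * h + h" using h by simp_all
  from split[OF this] have "indicator {a<..a + real (Suc k) * h} t * g t
      = indicator {a<..a + real k * h} t * g t + indicator {a + real k * h<..a + real k * h + h} t * g t"
    for t
    by (simp add: algebra_simps)
  then have "window_mass g a (real (Suc k) * h) = window_mass g a (real k * h) + window_mass g (a + real k * h) h"
    using int[of a] int[of "a + real k * h"] h by (simp add: window_mass_def)
  then show ?case using Suc by simp
qed (simp add: window_mass_def)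

lemma window_mass_mono:
  fixes g :: "real \<Rightarrow> real"
  assumes "integrable lborel (\<lambda>t. indicator {s<..s + h} t * g t)"
    and "integrable lborel (\<lambda>t. indicator {s<..s + h'} t * g t)"
    and "h \<le> h'" and "\<And>t. s < t \<Longrightarrow> 0 \<le> g t"
  shows "window_mass g s h \<le> window_mass g s h'"
  unfolding window_mass_def
  by (rule integral_mono[OF assms(1,2)]) (use assms(3,4) in \<open>auto simp: indicator_def\<close>)

lemma integrable_interval_antitone:
  fixes \<phi> :: "real \<Rightarrow> real"
  assumes anti: "antimono_on {0<..} \<phi>" and nonneg: "\<And>t. 0 < t \<Longrightarrow> 0 \<le> \<phi> t" and u: "0 < u"
  shows "integrable lborel (\<lambda>t. indicator {u<..v} t * \<phi> t)"
proof -
  define \<psi> where "\<psi> t = \<phi> (max t u)" for t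
  have "mono (\<lambda>t. - \<psi> t)"
  proof (rule monoI)
    fix x y :: real assume "x \<le> y"
    then show "- \<psi> x \<le> - \<psi> y"
      unfolding \<psi>_def using u by (intro le_imp_neg_le monotone_onD[OF anti]) auto
  qed
  then have "(\<lambda>t. - \<psi> t) \<in> borel_measurable borel" by (rule borel_measurable_mono)
  then have "\<psi> \<in> borel_measurable borel"
    using borel_measurable_uminus[of "\<lambda>t. - \<psi> t"] by simp
  have eq: "(\<lambda>t. indicator {u<..v} t * \<phi> t) = (\<lambda>t. indicator {u<..v} t * \<psi> t)"
    by (auto simp: \<psi>_def indicator_def max_def)
  show ?thesis unfolding eq
  proof (rule Bochner_Integration.integrable_bound)
    show "integrable lborel (\<lambda>t. indicator {u<..v} t * \<phi> u)"
      by (cases "u \<le> v") (auto intro!: integrable_mult_left integrable_real_indicator)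
    show "(\<lambda>t. indicator {u<..v} t * \<psi> t) \<in> borel_measurable lborel"
      using \<open>\<psi> \<in> borel_measurable borel\<close> by measurable
    have "norm (indicator {u<..v} t * \<psi> t) \<le> norm (indicator {u<..v} t * \<phi> u)" for t
    proof (cases "u < t \<and> t \<le> v")
      case True
      then have "\<phi> t \<le> \<phi> u" "0 \<le> \<phi> t" using u nonneg by (auto intro: monotone_onD[OF anti])
      then show ?thesis using True by (simp add: \<psi>_def max_def)
    qed (auto simp: indicator_def)
    then show "AE t in lborel. norm (indicator {u<..v} t * \<psi> t) \<le> norm (indicator {u<..v} t * \<phi> u)"
      by simp
  qed
qed

lemma window_mass_antitone_bounds:
  fixes \<phi> :: "real \<Rightarrow> real"
  assumes anti: "antimono_on {0<..} \<phi>" and nonneg: "\<And>t. 0 < t \<Longrightarrow> 0 \<le> \<phi> t"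
    and s: "0 < s" and h: "0 \<le> h"
  shows "h * \<phi> (s + h) \<le> window_mass \<phi> s h" "window_mass \<phi> s h \<le> h * \<phi> s"
proof -
  have int: "integrable lborel (\<lambda>t. indicator {s<..s + h} t * \<phi> t)"
    by (rule integrable_interval_antitone[OF anti nonneg s])
  have int_const: "integrable lborel (\<lambda>t. indicator {s<..s + h} t * C)" for C :: real
    using h by (auto intro!: integrable_mult_left integrable_real_indicator)
  have const: "integral\<^sup>L lborel (\<lambda>t. indicator {s<..s + h} t * C) = h * C" for C :: real
    using h by simp
  have "integral\<^sup>L lborel (\<lambda>t. indicator {s<..s + h} t * \<phi> (s + h)) \<le> window_mass \<phi> s h"
    unfolding window_mass_def
  proof (rule integral_mono[OF int_const int])
    fix t
    show "indicator {s<..s + h} t * \<phi> (s + h) \<le> indicator {s<..s + h} t * \<phi> t"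
      using s by (cases "s < t \<and> t \<le> s + h") (auto intro: monotone_onD[OF anti])
  qed
  then show "h * \<phi> (s + h) \<le> window_mass \<phi> s h" by (simp only: const)
  have "window_mass \<phi> s h \<le> integral\<^sup>L lborel (\<lambda>t. indicator {s<..s + h} t * \<phi> s)"
    unfolding window_mass_def
  proof (rule integral_mono[OF int int_const])
    fix t
    show "indicator {s<..s + h} t * \<phi> t \<le> indicator {s<..s + h} t * \<phi> s"
      using s by (cases "s < t \<and> t \<le> s + h") (auto intro: monotone_onD[OF anti])
  qed
  then show "window_mass \<phi> s h \<le> h * \<phi> s" by (simp only: const)
qed

lemma window_mass_riemann_bounds:
  fixes g \<phi> :: "real \<Rightarrow> real"
  assumes int: "\<And>u v. 0 < u \<Longrightarrow> integrable lborel (\<lambda>t. indicator {u<..v} t * g t)"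
    and nonneg: "\<And>t. 0 < t \<Longrightarrow> 0 \<le> g t"
    and a: "0 < a" and h: "0 < h"
    and lower: "\<And>s. 0 < s \<Longrightarrow> h * \<phi> (s + h) \<le> window_mass g s h"
    and upper: "\<And>s. 0 < s \<Longrightarrow> window_mass g s h \<le> h * \<phi> s"
    and N: "real N * h \<le> l" "l \<le> real (Suc N) * h"
  shows "(\<Sum>j<N. h * \<phi> (a + real j * h + h)) \<le> window_mass g a l"
    and "window_mass g a l \<le> (\<Sum>j<Suc N. h * \<phi> (a + real j * h))"
proof -
  have pos: "0 < a + real j * h" for j using a h by (simp add: add_pos_nonneg)
  have split: "window_mass g a (real k * h) = (\<Sum>j<k. window_mass g (a + real j * h) h)" for k
    using a h int by (intro window_mass_split) auto
  have mono: "window_mass g a l' \<le> window_mass g a l''" if "l' \<le> l''" for l' l''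
    using a that nonneg int by (intro window_mass_mono) auto
  have "(\<Sum>j<N. h * \<phi> (a + real j * h + h)) \<le> (\<Sum>j<N. window_mass g (a + real j * h) h)"
    using lower[OF pos] by (intro sum_mono) simp
  also have "\<dots> \<le> window_mass g a l" using mono[OF N(1)] by (simp only: split)
  finally show "(\<Sum>j<N. h * \<phi> (a + real j * h + h)) \<le> window_mass g a l" .
  have "window_mass g a l \<le> (\<Sum>j<Suc N. window_mass g (a + real j * h) h)"
    using mono[OF N(2)] by (simp only: split)
  also have "\<dots> \<le> (\<Sum>j<Suc N. h * \<phi> (a + real j * h))"
    using upper pos by (intro sum_mono) simp
  finally show "window_mass g a l \<le> (\<Sum>j<Suc N. h * \<phi> (a + real j * h))" .
qed

lemma half_power_eq:
  assumes "n \<le> m"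
  shows "(1 / 2 :: real) ^ n = real (2 ^ (m - n)) * (1 / 2) ^ m"
proof -
  have "(1 / 2 :: real) ^ m = (1 / 2) ^ n * (1 / 2) ^ (m - n)"
    using assms by (simp flip: power_add)
  moreover have "real (2 ^ (m - n)) * (1 / 2 :: real) ^ (m - n) = 1"
    by (simp add: power_one_over)
  ultimately show ?thesis by (simp add: mult.left_commute)
qed

lemma two_power_mult_eq: "n \<le> m \<Longrightarrow> (2 :: real) ^ n * real (2 ^ (m - n)) = 2 ^ m"
  by (simp flip: power_add)

locale antitone_windows =
  fixes \<nu> :: "real \<Rightarrow> real"
  assumes integrable_interval: "0 < u \<Longrightarrow> integrable lborel (\<lambda>t. indicator {u<..v} t * \<nu> t)"
    and nonneg: "0 < t \<Longrightarrow> 0 \<le> \<nu> t"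
    and window_antitone: "0 < a \<Longrightarrow> a \<le> b \<Longrightarrow> 0 < h \<Longrightarrow> window_mass \<nu> b h \<le> window_mass \<nu> a h"
begin

definition dyadic_slope :: "nat \<Rightarrow> real \<Rightarrow> real" where
  "dyadic_slope n s = 2 ^ n * window_mass \<nu> s ((1 / 2) ^ n)"

definition antitone_density :: "real \<Rightarrow> real" where
  "antitone_density t = (if 0 < t then (SUP n. dyadic_slope n t) else 0)"

lemma window_mass_nonneg: "0 < s \<Longrightarrow> 0 \<le> window_mass \<nu> s h"
  unfolding window_mass_def
  by (rule Bochner_Integration.integral_nonneg) (auto simp: indicator_def nonneg)

lemma split_window_mass:
  "0 < s \<Longrightarrow> 0 \<le> \<delta> \<Longrightarrow>
    window_mass \<nu> s (real k * \<delta>) = (\<Sum>j<k. window_mass \<nu> (s + real j * \<delta>) \<delta>)"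
  by (rule window_mass_split) (auto intro: integrable_interval)

lemma window_mass_le_mult:
  assumes "0 < s" "0 < \<delta>"
  shows "window_mass \<nu> s (real k * \<delta>) \<le> real k * window_mass \<nu> s \<delta>"
proof -
  have "window_mass \<nu> s (real k * \<delta>) = (\<Sum>j<k. window_mass \<nu> (s + real j * \<delta>) \<delta>)"
    using split_window_mass assms by simp
  also have "\<dots> \<le> (\<Sum>j<k. window_mass \<nu> s \<delta>)"
    using assms by (intro sum_mono window_antitone) auto
  finally show ?thesis by simp
qed

lemma mult_le_window_mass:
  assumes "0 < s" "0 < \<delta>"
  shows "real k * window_mass \<nu> (s + real k * \<delta>) \<delta> \<le> window_mass \<nu> s (real k * \<delta>)"
proof -
  have "real k * window_mass \<nu> (s + real k * \<delta>) \<delta> = (\<Sum>j<k. window_mass \<nu> (s + real k * \<delta>) \<delta>)"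
    by simp
  also have "\<dots> \<le> (\<Sum>j<k. window_mass \<nu> (s + real j * \<delta>) \<delta>)"
    using assms by (intro sum_mono window_antitone) (auto simp: add_pos_nonneg mult_right_mono)
  also have "\<dots> = window_mass \<nu> s (real k * \<delta>)"
    using split_window_mass assms by simp
  finally show ?thesis .
qed

lemma dyadic_slope_mono:
  assumes "0 < s" "n \<le> m"
  shows "dyadic_slope n s \<le> dyadic_slope m s"
proof -
  have "dyadic_slope n s = 2 ^ n * window_mass \<nu> s (real (2 ^ (m - n)) * (1 / 2) ^ m)"
    unfolding dyadic_slope_def half_power_eq[OF assms(2)] ..
  also have "\<dots> \<le> 2 ^ n * (real (2 ^ (m - n)) * window_mass \<nu> s ((1 / 2) ^ m))"
    using assms by (intro mult_left_mono window_mass_le_mult) auto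
  also have "\<dots> = dyadic_slope m s"
    unfolding dyadic_slope_def mult.assoc[symmetric] two_power_mult_eq[OF assms(2)] ..
  finally show ?thesis .
qed

lemma dyadic_slope_antitone: "0 < s \<Longrightarrow> s \<le> s' \<Longrightarrow> dyadic_slope n s' \<le> dyadic_slope n s"
  unfolding dyadic_slope_def by (intro mult_left_mono window_antitone) auto

lemma dyadic_slope_shift_le:
  assumes "0 < s"
  shows "dyadic_slope m (s + (1 / 2) ^ n) \<le> dyadic_slope n s"
proof (cases "n \<le> m")
  case True
  have "real (2 ^ (m - n)) * window_mass \<nu> (s + real (2 ^ (m - n)) * (1 / 2) ^ m) ((1 / 2) ^ m)
      \<le> window_mass \<nu> s (real (2 ^ (m - n)) * (1 / 2) ^ m)"
    using assms by (intro mult_le_window_mass) auto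
  then have "2 ^ n * (real (2 ^ (m - n)) * window_mass \<nu> (s + (1 / 2) ^ n) ((1 / 2) ^ m))
      \<le> 2 ^ n * window_mass \<nu> s ((1 / 2) ^ n)"
    unfolding half_power_eq[OF True, symmetric] by (intro mult_left_mono) auto
  then show ?thesis
    unfolding dyadic_slope_def mult.assoc[symmetric] two_power_mult_eq[OF True] .
next
  case False
  have "0 < s + (1 / 2 :: real) ^ n" using assms by (simp add: add_pos_pos)
  then have "dyadic_slope m (s + (1 / 2) ^ n) \<le> dyadic_slope n (s + (1 / 2) ^ n)"
    using False by (intro dyadic_slope_mono) auto
  also have "\<dots> \<le> dyadic_slope n s" using assms by (intro dyadic_slope_antitone) auto
  finally show ?thesis .
qed

lemma bdd_above_dyadic_slope:
  assumes "0 < t"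
  shows "bdd_above (range (\<lambda>n. dyadic_slope n t))"
proof -
  obtain m where m: "(1 / 2 :: real) ^ m < t" using real_arch_pow_inv[OF assms, of "1 / 2"] by auto
  have "dyadic_slope n t \<le> dyadic_slope m (t - (1 / 2) ^ m)" for n
    using dyadic_slope_shift_le[of "t - (1 / 2) ^ m" n m] m by simp
  then show ?thesis by (intro bdd_aboveI2) auto
qed

lemma dyadic_slope_le_antitone_density: "0 < t \<Longrightarrow> dyadic_slope n t \<le> antitone_density t"
  unfolding antitone_density_def using bdd_above_dyadic_slope by (auto intro: cSUP_upper)

lemma antitone_density_le: "0 < t \<Longrightarrow> (\<And>n. dyadic_slope n t \<le> B) \<Longrightarrow> antitone_density t \<le> B"
  unfolding antitone_density_def by (auto intro: cSUP_least)

lemma antitone_density_antitone: "antimono_on {0<..} antitone_density"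
proof (rule monotone_onI)
  fix s t :: real assume st: "s \<in> {0<..}" "t \<in> {0<..}" "s \<le> t"
  show "antitone_density t \<le> antitone_density s"
  proof (rule antitone_density_le)
    fix n
    have "dyadic_slope n t \<le> dyadic_slope n s" using st by (intro dyadic_slope_antitone) auto
    also have "\<dots> \<le> antitone_density s" using st by (intro dyadic_slope_le_antitone_density) auto
    finally show "dyadic_slope n t \<le> antitone_density s" .
  qed (use st in auto)
qed

lemma antitone_density_nonneg: "0 \<le> antitone_density t"
proof (cases "0 < t")
  case True
  have "0 \<le> dyadic_slope 0 t" unfolding dyadic_slope_def using window_mass_nonneg[OF True] by simp
  also have "\<dots> \<le> antitone_density t" by (rule dyadic_slope_le_antitone_density[OF True])
  finally show ?thesis .
qed (simp add: antitone_density_def)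

lemma window_mass_le_antitone_density:
  assumes "0 < s"
  shows "window_mass \<nu> s ((1 / 2) ^ n) \<le> (1 / 2) ^ n * antitone_density s"
proof -
  have "window_mass \<nu> s ((1 / 2) ^ n) = (1 / 2) ^ n * dyadic_slope n s"
    by (simp add: dyadic_slope_def power_one_over)
  also have "\<dots> \<le> (1 / 2) ^ n * antitone_density s"
    by (intro mult_left_mono dyadic_slope_le_antitone_density assms) simp
  finally show ?thesis .
qed

lemma antitone_density_le_window_mass:
  assumes "0 < s"
  shows "(1 / 2) ^ n * antitone_density (s + (1 / 2) ^ n) \<le> window_mass \<nu> s ((1 / 2) ^ n)"
proof -
  have "antitone_density (s + (1 / 2) ^ n) \<le> dyadic_slope n s"
    using assms by (intro antitone_density_le dyadic_slope_shift_le) (auto simp: add_pos_pos)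
  then have "(1 / 2) ^ n * antitone_density (s + (1 / 2) ^ n) \<le> (1 / 2) ^ n * dyadic_slope n s"
    by (simp add: mult_left_mono)
  also have "\<dots> = window_mass \<nu> s ((1 / 2) ^ n)"
    by (simp add: dyadic_slope_def power_one_over)
  finally show ?thesis .
qed

lemma integrable_interval_antitone_density:
  "0 < u \<Longrightarrow> integrable lborel (\<lambda>t. indicator {u<..v} t * antitone_density t)"
  using antitone_density_antitone antitone_density_nonneg by (rule integrable_interval_antitone)

lemma window_mass_antitone_density_approx:
  assumes a: "0 < a" and l: "0 \<le> l"
  shows "\<bar>window_mass antitone_density a l - window_mass \<nu> a l\<bar> \<le> (1 / 2) ^ n * antitone_density a"
proof -
  define h where "h = (1 / 2 :: real) ^ n"
  have h: "0 < h" by (simp add: h_def)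
  define N where "N = nat \<lfloor>l / h\<rfloor>"
  have "real N \<le> l / h" "l / h < real N + 1"
    using l h by (simp_all add: N_def)
  then have N: "real N * h \<le> l" "l \<le> real (Suc N) * h"
    using h by (simp_all add: field_simps)
  define L where "L = (\<Sum>j<N. h * antitone_density (a + real j * h + h))"
  have U: "(\<Sum>j<Suc N. h * antitone_density (a + real j * h)) = h * antitone_density a + L"
    unfolding L_def by (subst sum.lessThan_Suc_shift) (simp add: algebra_simps)
  have lower_\<nu>: "h * antitone_density (s + h) \<le> window_mass \<nu> s h" if "0 < s" for s
    unfolding h_def using that by (rule antitone_density_le_window_mass)
  have upper_\<nu>: "window_mass \<nu> s h \<le> h * antitone_density s" if "0 < s" for s
    unfolding h_def using that by (rule window_mass_le_antitone_density)
  have nonneg_\<mu>: "0 < t \<Longrightarrow> 0 \<le> antitone_density t" for t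
    by (rule antitone_density_nonneg)
  have lower_\<mu>: "h * antitone_density (s + h) \<le> window_mass antitone_density s h" if "0 < s" for s
    using window_mass_antitone_bounds(1)[OF antitone_density_antitone nonneg_\<mu> that] h by simp
  have upper_\<mu>: "window_mass antitone_density s h \<le> h * antitone_density s" if "0 < s" for s
    using window_mass_antitone_bounds(2)[OF antitone_density_antitone nonneg_\<mu> that] h by simp
  note bounds_\<nu> = window_mass_riemann_bounds[OF integrable_interval nonneg a h lower_\<nu> upper_\<nu> N,
      folded L_def, unfolded U]
  note bounds_\<mu> = window_mass_riemann_bounds[OF integrable_interval_antitone_density
      nonneg_\<mu> a h lower_\<mu> upper_\<mu> N, folded L_def, unfolded U]
  from bounds_\<nu> bounds_\<mu> show ?thesis unfolding h_def by linarith
qed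

lemma integral_antitone_density_eq:
  assumes u: "0 < u"
  shows "integral\<^sup>L lborel (\<lambda>t. indicator {u<..v} t * antitone_density t)
       = integral\<^sup>L lborel (\<lambda>t. indicator {u<..v} t * \<nu> t)"
proof (cases "u \<le> v")
  case True
  have "(\<lambda>n. (1 / 2 :: real) ^ n * antitone_density u) \<longlonglongrightarrow> 0"
    by (intro tendsto_mult_left_zero LIMSEQ_power_zero) simp
  moreover have "\<bar>window_mass antitone_density u (v - u) - window_mass \<nu> u (v - u)\<bar>
      \<le> (1 / 2) ^ n * antitone_density u" for n
    using u True by (intro window_mass_antitone_density_approx) auto
  ultimately have "\<bar>window_mass antitone_density u (v - u) - window_mass \<nu> u (v - u)\<bar> \<le> 0"
    by (intro tendsto_lowerbound[of "\<lambda>n. (1 / 2) ^ n * antitone_density u"] always_eventually) auto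
  then show ?thesis by (simp add: window_mass_def)
qed simp

lemma AE_antitone_density_eq: "AE t in lborel. 0 < t \<longrightarrow> antitone_density t = \<nu> t"
  using integrable_interval_antitone_density integrable_interval antitone_density_nonneg nonneg
    integral_antitone_density_eq
  by (rule AE_eq_of_interval_integrals_eq)

end

theorem proposition3p1:
  fixes f \<nu> :: "real \<Rightarrow> real" and l0 :: real
  assumes "completely_monotone f"
    and "rep_density f \<nu>"
    and "\<forall>t>0. \<nu> t > 0"
    and "l0 > 0"
    and "\<forall>n::nat. \<forall>x>l0.
           (-x) ^ n * (deriv ^^ n) f x / fact n
             \<ge> (-x) ^ (Suc n) * (deriv ^^ Suc n) f x / fact (Suc n)"
    and "(f \<longlongrightarrow> 0) at_top"
  shows "\<exists>\<mu> :: real \<Rightarrow> real.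
           antimono_on {0<..} \<mu> \<and> (\<forall>t>0. \<mu> t \<ge> 0) \<and>
           (AE t in lborel. t > 0 \<longrightarrow> \<mu> t = \<nu> t)"
proof -
  interpret L: laplace_density \<nu>
    using assms(2) by unfold_locales (auto simp: rep_density_def set_integrable_def)
  have "f x = L.laplace_deriv 0 x" if "0 < x" for x
    using assms(2) that by (simp add: rep_density_def set_lebesgue_integral_def L.laplace_deriv_def)
  then have derivs: "(deriv ^^ n) f x = L.laplace_deriv n x" if "0 < x" for n x
    using that by (rule L.higher_deriv_eq_laplace_deriv)
  have coeff_antitone: "L.poisson_mixture (Suc k) x \<le> L.poisson_mixture k x" if x: "l0 < x" for x k
  proof -
    have "(- x) ^ Suc k * (deriv ^^ Suc k) f x / fact (Suc k) \<le> (- x) ^ k * (deriv ^^ k) f x / fact k"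
      using assms(5) x by blast
    moreover have "0 < x" using assms(4) x by linarith
    ultimately show ?thesis by (simp only: derivs L.laplace_deriv_eq_poisson_mixture)
  qed
  have "window_mass \<nu> b h \<le> window_mass \<nu> a h" if "0 < a" "a \<le> b" "0 < h" for a b h
    by (rule L.window_mass_antitone[OF coeff_antitone]) (use assms(4) that in auto)
  then interpret W: antitone_windows \<nu>
    by unfold_locales (auto intro: L.integrable_on_interval L.nonneg)
  show ?thesis
    using W.antitone_density_antitone W.antitone_density_nonneg W.AE_antitone_density_eq by blast
qed

end
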